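(* Let $\alpha\in(0,1]$ and $\mathbf u=(u_1,\dots,u_m)\in[0,1]^m$ with $m\ge1$. Let $k_1,\dots,k_l\in\{1,\dots,m\}$ be distinct with $\sum_{i=1}^lu_{k_i}\le\alpha l$. Then $H_{\mathrm o}([\mathbf u])\preccurlyeq[(u_{k_1},\dots,u_{k_l})]$. Moreover, if $H_{\mathrm o}([\mathbf u])=\varnothing$, then every nonempty $S\subset\{1,\dots,m\}$ satisfies $\sum_{i\in S}u_i>\alpha|S|$.
   Context: $\mathcal S_{\mathrm o}=\bigcup_{m\ge1}\{(v_1,\dots,v_m)\in[0,1]^m:v_1\le\cdots\le v_m\}\cup\{\varnothing\}$, where $\varnothing$ is the vector of length $0$; $\dim(\mathbf u)$ is the length of $\mathbf u$. Partial order: for $\mathbf u,\mathbf v\in\mathcal S_{\mathrm o}$, $\mathbf u\preccurlyeq\mathbf v$ iff $\dim(\mathbf u)\ge\dim(\mathbf v)$ and $u_i\le v_i$ for $i=1,\dots,\dim(\mathbf v)$ (in particular $\mathbf u\preccurlyeq\varnothing$ for all $\mathbf u$). For a finite vector $\mathbf v$, $[\mathbf v]$ is its order statistic (components sorted increasingly), $[\varnothing]=\varnothing$; for $l=0$, $[(u_{k_1},\dots,u_{k_l})]=\varnothing$. For $\mathbf u=(u_1,\dots,u_d)\in\mathcal S_{\mathrm o}$ with $d\ge1$, $I_{\mathrm o}(\mathbf u)=\max\{n\in\{0,\dots,d\}:\sum_{i=1}^nu_i\le\alpha n\}$, and $I_{\mathrm o}(\varnothing)=0$; $H_{\mathrm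 o}(\mathbf u)=(u_1,\dots,u_{I_{\mathrm o}(\mathbf u)})$ if $I_{\mathrm o}(\mathbf u)\ge1$ and $H_{\mathrm o}(\mathbf u)=\varnothing$ otherwise. *)

theory Defs
  imports Complex_Main
begin

text \<open>Finite vectors are represented as lists of reals (index i of the paper is
  list position i-1). The order statistic [v] is List.sort v; the empty vector is [].\<close>

definition ord_stat :: "real list \<Rightarrow> real list" where
  "ord_stat v = sort v"

definition vprec :: "real list \<Rightarrow> real list \<Rightarrow> bool" where
  "vprec u v \<longleftrightarrow> length u \<ge> length v \<and> (\<forall>i < length v. u ! i \<le> v ! i)"

definition I_o :: "real \<Rightarrow> real list \<Rightarrow> nat" where
  "I_o \<alpha> u = Max {n. n \<le> length u \<and> sum_list (take n u) \<le> \<alpha> * real n}"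

definition H_o :: "real \<Rightarrow> real list \<Rightarrow> real list" where
  "H_o \<alpha> u = take (I_o \<alpha> u) u"

end

theory Submission
  imports Defs "HOL-Library.Multiset"
begin

text \<open>If the entries indexed by \<open>ks\<close> have average at most \<alpha>, then so do the \<open>l = |ks|\<close>
  smallest entries of \<open>u\<close>, because the \<open>i\<close>-th smallest element of a multiset is at most the
  \<open>i\<close>-th smallest element of any submultiset. Hence \<open>I_o([u]) \<ge> l\<close>, and entrywise
  \<open>[u]_i \<le> [(u_k)_{k\<in>ks}]_i\<close>. For the second claim, a nonempty \<open>S\<close> with average at most \<alpha>
  would force \<open>I_o([u]) \<ge> |S| > 0\<close>.\<close>

lemma nth_insort_le:
  fixes xs :: "'a::linorder list"
  assumes "sorted xs" "i < length xs"
  shows "insort x xs ! i \<le> xs ! i"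
  using assms
proof (induction xs arbitrary: i)
  case Nil
  then show ?case by simp
next
  case (Cons y xs)
  show ?case
  proof (cases i)
    case 0
    then show ?thesis by auto
  next
    case (Suc j)
    show ?thesis
    proof (cases "x \<le> y")
      case True
      have "(y # xs) ! j \<le> (y # xs) ! Suc j"
        using Cons.prems Suc by (intro sorted_nth_mono) auto
      then show ?thesis using True Suc by simp
    next
      case False
      then show ?thesis using Cons Suc by auto
    qed
  qed
qed

lemma nth_sort_append_le:
  fixes xs ys :: "'a::linorder list"
  assumes "i < length ys"
  shows "sort (xs @ ys) ! i \<le> sort ys ! i"
proof (induction xs)
  case Nil
  show ?case by simp
next
  case (Cons x xs)
  have "sort ((x # xs) @ ys) ! i = insort x (sort (xs @ ys)) ! i" by simp
  also have "\<dots> \<le> sort (xs @ ys) ! i"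
    using assms by (intro nth_insort_le) auto
  finally show ?case using Cons.IH by simp
qed

lemma nth_sort_le_if_subset_mset:
  fixes xs ys :: "'a::linorder list"
  assumes "mset ys \<subseteq># mset xs" "i < length ys"
  shows "sort xs ! i \<le> sort ys ! i"
proof -
  obtain zs where "mset xs = mset (zs @ ys)"
    using assms(1) by (metis mset_subset_eq_exists_conv ex_mset mset_append add.commute)
  then have "sort xs = sort (zs @ ys)"
    by (metis properties_for_sort mset_sort sorted_sort)
  then show ?thesis using nth_sort_append_le assms(2) by simp
qed

lemma sum_take_sort_le_if_subset_mset:
  fixes xs ys :: "'a::{linorder, ordered_comm_monoid_add} list"
  assumes "mset ys \<subseteq># mset xs"
  shows "sum_list (take (length ys) (sort xs)) \<le> sum_list ys"
proof -
  have "length ys \<le> length xs"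
    using size_mset_mono[OF assms] by simp
  then have "sum_list (take (length ys) (sort xs)) = (\<Sum>i<length ys. sort xs ! i)"
    by (simp add: sum_list_sum_nth atLeast0LessThan min_def)
  also have "\<dots> \<le> (\<Sum>i<length ys. sort ys ! i)"
    using nth_sort_le_if_subset_mset[OF assms] by (intro sum_mono) simp
  also have "\<dots> = sum_list (sort ys)"
    by (simp add: sum_list_sum_nth atLeast0LessThan)
  also have "\<dots> = sum_list ys"
    by (metis mset_sort sum_mset_sum_list)
  finally show ?thesis .
qed

lemma mset_map_nth_subset_mset:
  assumes "distinct ks" "\<forall>k \<in> set ks. k < length u"
  shows "mset (map ((!) u) ks) \<subseteq># mset u"
proof -
  have "mset ks \<subseteq># mset [0..<length u]"
    using assms by (metis subset_imp_msubset_mset_set finite_set mset_set_set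
        distinct_upt set_upt atLeast0LessThan lessThan_iff subsetI)
  then have "image_mset ((!) u) (mset ks) \<subseteq># image_mset ((!) u) (mset [0..<length u])"
    by (rule image_mset_subseteq_mono)
  then show ?thesis by (metis mset_map map_nth)
qed

lemma le_I_o:
  assumes "n \<le> length u" "sum_list (take n u) \<le> \<alpha> * real n"
  shows "n \<le> I_o \<alpha> u"
  unfolding I_o_def using assms by (intro Max_ge) auto

lemma I_o_le_length: "I_o \<alpha> u \<le> length u"
proof -
  have "0 \<in> {n. n \<le> length u \<and> sum_list (take n u) \<le> \<alpha> * real n}" by simp
  then show ?thesis unfolding I_o_def by (subst Max_le_iff) auto
qed

lemma vprec_H_o_sort_if_subset_mset:
  assumes "mset ys \<subseteq># mset xs" "sum_list ys \<le> \<alpha> * real (length ys)"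
  shows "vprec (H_o \<alpha> (sort xs)) (sort ys)"
proof -
  have "length ys \<le> length (sort xs)"
    using size_mset_mono[OF assms(1)] by simp
  moreover have "sum_list (take (length ys) (sort xs)) \<le> \<alpha> * real (length ys)"
    using sum_take_sort_le_if_subset_mset[OF assms(1)] assms(2) by simp
  ultimately have "length ys \<le> I_o \<alpha> (sort xs)"
    by (rule le_I_o)
  then show ?thesis
    using nth_sort_le_if_subset_mset[OF assms(1)] I_o_le_length[of \<alpha> "sort xs"]
    unfolding vprec_def H_o_def by auto
qed

lemma sum_gt_if_H_o_sort_Nil:
  assumes "H_o \<alpha> (sort u) = []" "S \<subseteq> {..<length u}" "S \<noteq> {}"
  shows "\<alpha> * real (card S) < (\<Sum>i\<in>S. u ! i)"
proof (rule ccontr)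
  assume average_le: "\<not> ?thesis"
  define ks where "ks = sorted_list_of_set S"
  have "finite S" using assms(2) finite_subset by blast
  then have ks: "distinct ks" "set ks = S" "length ks = card S"
    unfolding ks_def by auto
  then have "sum_list (map ((!) u) ks) = (\<Sum>i\<in>S. u ! i)"
    by (metis sum_list_distinct_conv_sum_set)
  then have "vprec (H_o \<alpha> (sort u)) (sort (map ((!) u) ks))"
    using average_le ks assms(2)
    by (intro vprec_H_o_sort_if_subset_mset mset_map_nth_subset_mset) auto
  then have "ks = []" using assms(1) unfolding vprec_def by simp
  then show False using ks assms(3) by simp
qed

theorem mainTheorem14:
  fixes \<alpha> :: real and u :: "real list" and ks :: "nat list"
  assumes alpha: "0 < \<alpha>" "\<alpha> \<le> 1"
    and m: "length u \<ge> 1"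
    and u01: "\<forall>i < length u. 0 \<le> u ! i \<and> u ! i \<le> 1"
    and ks_dist: "distinct ks"
    and ks_range: "\<forall>k \<in> set ks. k < length u"
    and ks_sum: "(\<Sum>k\<leftarrow>ks. u ! k) \<le> \<alpha> * real (length ks)"
  shows "vprec (H_o \<alpha> (ord_stat u)) (ord_stat (map (\<lambda>k. u ! k) ks))
    \<and> (H_o \<alpha> (ord_stat u) = [] \<longrightarrow>
        (\<forall>S. S \<subseteq> {..<length u} \<and> S \<noteq> {} \<longrightarrow> (\<Sum>i\<in>S. u ! i) > \<alpha> * real (card S)))"
  unfolding ord_stat_def
  using vprec_H_o_sort_if_subset_mset[OF mset_map_nth_subset_mset[OF ks_dist ks_range]]
    ks_sum sum_gt_if_H_o_sort_Nil
  by auto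

end
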